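(* Let $\mathbf{h}_1,\mathbf{h}_2\in\mathbb{C}^M$ be linearly independent, $P,\sigma^2>0$, and let $\kappa=\lambda_1/\lambda_2$ and $\theta$ be as in the context. Define $\eta(\kappa,\theta)=10\log_{10}\frac{\mathrm{SNR}_{\rm md}}{\mathrm{SNR}_{\rm zf}}$. Then: (1) if $0<\kappa\le1$ and $0\le\sin\theta\le\kappa$: $\eta=10\log_{10}\frac{1+\sin^2\theta}{(1-\sin\theta)^2}$; (2) if $0<\kappa\le1$ and $\kappa<\sin\theta<1$: $\eta=10\log_{10}\frac{(1+\sin^2\theta)(\kappa+\sin^2\theta)(1+1/\kappa)}{\cos^4\theta}$; (3) if $\kappa>1$ and $0\le\sin\theta\le1/\kappa$: $\eta=10\log_{10}\frac{1+\sin^2\theta}{(1-\sin\theta)^2}$; (4) if $\kappa>1$ and $1/\kappa<\sin\theta<1$: $\eta=10\log_{10}\frac{(1+\sin^2\theta)(1/\kappa+\sin^2\theta)(1+\kappa)}{\cos^4\theta}$.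
   Context: $\mathbf{A}=\mathbf{h}_1\mathbf{h}_1^H-\mathbf{h}_2\mathbf{h}_2^H=\mathbf{V}\,\mathrm{diag}(\lambda_1,-\lambda_2,0,\dots,0)\mathbf{V}^H$ with $\mathbf{V}$ unitary and $\lambda_1,\lambda_2>0$; $\tilde h_{1,1}$ is the first entry of $\mathbf{V}^H\mathbf{h}_1$ and $\theta=\arccos\frac{\sqrt{\lambda_1}}{|\tilde h_{1,1}|}\in[0,\pi/2)$. With $\mathbf{H}=[\mathbf{h}_1\ \mathbf{h}_2]$ and $\mu_1,\mu_2$ the eigenvalues of $\mathbf{H}^H\mathbf{H}$: $\mathrm{SNR}_{\rm zf}=\frac{P}{\sigma^2\sum_{i=1}^2[(\mathbf{H}^H\mathbf{H})^{-1}]_{i,i}}=\frac{P\mu_1\mu_2}{\sigma^2(\mu_1+\mu_2)}$, and $\mathrm{SNR}_{\rm md}=\frac{1}{\sigma^2}\max_{\mathbf{w}\in\mathbb{C}^M,\ \|\mathbf{w}\|^2=P}\min\{|\mathbf{h}_1^H\mathbf{w}|^2,|\mathbf{h}_2^H\mathbf{w}|^2\}$. *)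

theory Defs
  imports "HOL-Analysis.Analysis"
begin

text \<open>Vectors in C^M are modelled as complex^'m for a finite index type 'm (M = CARD('m)).\<close>

definition cinner :: "complex^'m \<Rightarrow> complex^'m \<Rightarrow> complex" where
  "cinner h w = (\<Sum>i\<in>UNIV. cnj (h $ i) * w $ i)"

definition outer :: "complex^'m \<Rightarrow> complex^'m^'m" where
  "outer h = (\<chi> i j. h $ i * cnj (h $ j))"

definition cadj :: "complex^'n^'m \<Rightarrow> complex^'m^'n" where
  "cadj A = (\<chi> i j. cnj (A $ j $ i))"

definition unitary :: "complex^'m^'m \<Rightarrow> bool" where
  "unitary V \<longleftrightarrow> cadj V ** V = mat 1 \<and> V ** cadj V = mat 1"

definition cdiag :: "('m \<Rightarrow> complex) \<Rightarrow> complex^'m^'m" where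
  "cdiag d = (\<chi> i j. if i = j then d i else 0)"

definition lin_indep2 :: "complex^'m \<Rightarrow> complex^'m \<Rightarrow> bool" where
  "lin_indep2 h1 h2 \<longleftrightarrow> (\<forall>a b::complex. a *s h1 + b *s h2 = 0 \<longrightarrow> a = 0 \<and> b = 0)"

definition chanmat :: "complex^'m \<Rightarrow> complex^'m \<Rightarrow> complex^2^'m" where
  "chanmat h1 h2 = (\<chi> i j. if j = 1 then h1 $ i else h2 $ i)"

definition snr_zf :: "real \<Rightarrow> real \<Rightarrow> complex^'m \<Rightarrow> complex^'m \<Rightarrow> real" where
  "snr_zf P \<sigma> h1 h2 =
     P / (\<sigma>\<^sup>2 * Re (\<Sum>i\<in>UNIV. matrix_inv (cadj (chanmat h1 h2) ** chanmat h1 h2) $ i $ i))"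

text \<open>SNR_md = (1/sigma^2) max_{||w||^2 = P} min(|h1^H w|^2, |h2^H w|^2)
  (the maximum is attained by compactness, so it is the supremum).\<close>
definition snr_md :: "real \<Rightarrow> real \<Rightarrow> complex^'m \<Rightarrow> complex^'m \<Rightarrow> real" where
  "snr_md P \<sigma> h1 h2 =
     (1 / \<sigma>\<^sup>2) * Sup {min ((cmod (cinner h1 w))\<^sup>2) ((cmod (cinner h2 w))\<^sup>2) | w. (norm w)\<^sup>2 = P}"

end

theory Submission
  imports Defs
begin

text \<open>Both SNRs depend on the channels only through the Gram data \<open>g\<^sub>i = \<parallel>h\<^sub>i\<parallel>\<^sup>2\<close> and
  \<open>\<rho> = |h\<^sub>1\<^sup>H h\<^sub>2|\<close>. Zero forcing gives \<open>P det G / (\<sigma>\<^sup>2 (g\<^sub>1 + g\<^sub>2))\<close>. The max-min problem has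
  value \<open>P min(g\<^sub>1, g\<^sub>2)\<close> when \<open>\<rho> > min(g\<^sub>1, g\<^sub>2)\<close> (beamforming to the weaker user already
  serves the other one), and \<open>P det G / (g\<^sub>1 + g\<^sub>2 - 2\<rho>)\<close> otherwise: the upper bound comes from
  projecting \<open>w\<close> onto \<open>span{h\<^sub>1, h\<^sub>2}\<close>, and it is attained by the beam equalising both gains.
  The eigendecomposition of \<open>h\<^sub>1h\<^sub>1\<^sup>H - h\<^sub>2h\<^sub>2\<^sup>H\<close> fixes \<open>g\<^sub>1 - g\<^sub>2 = \<lambda>\<^sub>1 - \<lambda>\<^sub>2\<close> and
  \<open>det G = \<lambda>\<^sub>1\<lambda>\<^sub>2\<close> (traces of \<open>A\<close> and \<open>A\<^sup>2\<close>), and the \<open>\<lambda>\<^sub>1\<close>-eigenvector yields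
  \<open>g\<^sub>1 = (\<lambda>\<^sub>1 + \<lambda>\<^sub>2 sin\<^sup>2\<theta>)/cos\<^sup>2\<theta>\<close>, \<open>g\<^sub>2 = (\<lambda>\<^sub>2 + \<lambda>\<^sub>1 sin\<^sup>2\<theta>)/cos\<^sup>2\<theta>\<close> and
  \<open>\<rho> = (\<lambda>\<^sub>1 + \<lambda>\<^sub>2) sin\<theta>/cos\<^sup>2\<theta>\<close>. The four cases are the comparison of \<open>\<rho>\<close> with
  \<open>min(g\<^sub>1, g\<^sub>2)\<close>, i.e. of \<open>sin\<theta>\<close> with \<open>\<kappa>\<close> or \<open>1/\<kappa>\<close>.\<close>

lemma cinner_add_left: "cinner (u + v) h = cinner u h + cinner v h"
  by (simp add: cinner_def distrib_right sum.distrib)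

lemma cinner_add_right: "cinner h (u + v) = cinner h u + cinner h v"
  by (simp add: cinner_def distrib_left sum.distrib)

lemma cinner_diff_right: "cinner h (u - v) = cinner h u - cinner h v"
  by (simp add: cinner_def right_diff_distrib sum_subtractf)

lemma cinner_smult_left: "cinner (c *s h) u = cnj c * cinner h u"
  by (simp add: cinner_def sum_distrib_left algebra_simps)

lemma cinner_smult_right: "cinner h (c *s u) = c * cinner h u"
  by (simp add: cinner_def sum_distrib_left algebra_simps)

lemma cnj_cinner: "cnj (cinner h u) = cinner u h"
  by (simp add: cinner_def mult.commute)

lemma cmod_cinner_commute: "cmod (cinner u h) = cmod (cinner h u)"
  by (metis cnj_cinner complex_mod_cnj)

lemma cinner_self: "cinner w w = complex_of_real ((norm w)\<^sup>2)"
proof -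
  have norm2: "(norm w)\<^sup>2 = (\<Sum>i\<in>UNIV. (cmod (w $ i))\<^sup>2)"
    by (simp add: norm_vec_def L2_set_def sum_nonneg)
  show ?thesis
    unfolding norm2 cinner_def of_real_sum
    by (intro sum.cong refl) (metis complex_norm_square mult.commute of_real_power)
qed

lemma cmod_cinner_le: "cmod (cinner h w) \<le> norm h * norm w"
proof -
  have "cmod (cinner h w) \<le> (\<Sum>i\<in>UNIV. \<bar>cmod (h $ i)\<bar> * \<bar>cmod (w $ i)\<bar>)"
    unfolding cinner_def by (rule order_trans[OF norm_sum]) (simp add: norm_mult)
  also have "\<dots> \<le> norm h * norm w"
    unfolding norm_vec_def by (rule L2_set_mult_ineq)
  finally show ?thesis .
qed

lemma cmod_cinner_power2_le: "(cmod (cinner h w))\<^sup>2 \<le> (norm h)\<^sup>2 * (norm w)\<^sup>2"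
  by (metis cmod_cinner_le norm_ge_zero power_mono power_mult_distrib)

section \<open>The max-min beamforming gain\<close>

text \<open>The optimal value of \<open>min(|h\<^sub>1\<^sup>H w|\<^sup>2, |h\<^sub>2\<^sup>H w|\<^sup>2)\<close> over unit vectors \<open>w\<close>, where
  \<open>g\<^sub>i = \<parallel>h\<^sub>i\<parallel>\<^sup>2\<close> and \<open>\<rho> = |h\<^sub>1\<^sup>H h\<^sub>2|\<close>.\<close>
definition maxmin_gain :: "real \<Rightarrow> real \<Rightarrow> real \<Rightarrow> real" where
  "maxmin_gain g1 g2 \<rho> =
     (if min g1 g2 < \<rho> then min g1 g2 else (g1 * g2 - \<rho>\<^sup>2) / (g1 + g2 - 2 * \<rho>))"

lemma maxmin_gain_commute: "maxmin_gain g2 g1 \<rho> = maxmin_gain g1 g2 \<rho>"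
  by (simp add: maxmin_gain_def min.commute mult.commute add.commute)

text \<open>The vector \<open>p\<close> below is \<open>det G\<close> times the orthogonal projection of \<open>w\<close> onto
  \<open>span{h\<^sub>1, h\<^sub>2}\<close>, and the quadratic form is \<open>Re \<langle>p, w\<rangle> = \<parallel>p\<parallel>\<^sup>2 / det G\<close>;
  Cauchy-Schwarz for \<open>\<langle>p, w\<rangle>\<close> gives the bound.\<close>
lemma gram_quadratic_form_le:
  fixes h1 h2 w :: "complex^'m"
  defines "g1 \<equiv> (norm h1)\<^sup>2" and "g2 \<equiv> (norm h2)\<^sup>2" and "z \<equiv> cinner h1 h2"
  defines "D \<equiv> g1 * g2 - (cmod z)\<^sup>2"
  assumes D: "D > 0"
  shows "g2 * (cmod (cinner h1 w))\<^sup>2 + g1 * (cmod (cinner h2 w))\<^sup>2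
           - 2 * Re (z * cnj (cinner h1 w) * cinner h2 w) \<le> D * (norm w)\<^sup>2"
proof -
  define x where "x = cinner h1 w"
  define y where "y = cinner h2 w"
  define a where "a = of_real g2 * x - z * y"
  define b where "b = of_real g1 * y - cnj z * x"
  define p where "p = a *s h1 + b *s h2"
  define q where "q = cinner p w"
  have h11: "cinner h1 h1 = of_real g1" unfolding g1_def by (rule cinner_self)
  have h22: "cinner h2 h2 = of_real g2" unfolding g2_def by (rule cinner_self)
  have h21: "cinner h2 h1 = cnj z" unfolding z_def by (simp add: cnj_cinner)
  have zz: "z * cnj z = of_real ((cmod z)\<^sup>2)" by (rule complex_norm_square[symmetric])
  have p1: "cinner h1 p = of_real D * x"
    unfolding p_def cinner_add_right cinner_smult_right h11 z_def[symmetric] a_def b_def D_def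
    by (simp add: algebra_simps zz)
  have p2: "cinner h2 p = of_real D * y"
    unfolding p_def cinner_add_right cinner_smult_right h22 h21 a_def b_def D_def
    by (simp add: algebra_simps zz)
  have q: "q = cnj a * x + cnj b * y"
    unfolding q_def p_def cinner_add_left cinner_smult_left x_def y_def ..
  have "of_real ((norm p)\<^sup>2) = cnj a * cinner h1 p + cnj b * cinner h2 p"
    unfolding cinner_self[symmetric] by (subst (1) p_def) (simp only: cinner_add_left cinner_smult_left)
  also have "\<dots> = of_real D * q"
    unfolding p1 p2 q by (simp add: algebra_simps)
  finally have q_real: "q = of_real ((norm p)\<^sup>2 / D)"
    using D by (simp add: field_simps)
  define r where "r = (norm p)\<^sup>2 / D"
  have np: "(norm p)\<^sup>2 = D * r" unfolding r_def using D by simp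
  have "r * r \<le> r * (D * (norm w)\<^sup>2)"
    using cmod_cinner_power2_le[of p w] D unfolding q_def[symmetric] q_real r_def[symmetric] np
    by (simp add: power2_eq_square algebra_simps)
  moreover have "r \<ge> 0" unfolding r_def using D by simp
  ultimately have "r \<le> D * (norm w)\<^sup>2"
    using D by (cases "r = 0") (simp_all add: mult_le_cancel_left)
  moreover have "Re q = g2 * (cmod x)\<^sup>2 + g1 * (cmod y)\<^sup>2 - 2 * Re (z * cnj x * y)"
    unfolding q a_def b_def
    by (simp add: algebra_simps cmod_power2[unfolded power2_eq_square] power2_eq_square)
  moreover have "Re q = r" unfolding q_real r_def by simp
  ultimately show ?thesis unfolding x_def y_def by simp
qed

lemma min_power2_le_quadratic:
  fixes X Y g1 g2 \<rho> :: real
  assumes "0 \<le> X" "0 \<le> Y" "\<rho> \<le> g1" "\<rho> \<le> g2" "0 \<le> g1" "0 \<le> g2"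
  shows "(g1 + g2 - 2 * \<rho>) * min (X\<^sup>2) (Y\<^sup>2) \<le> g2 * X\<^sup>2 + g1 * Y\<^sup>2 - 2 * \<rho> * X * Y"
proof (cases "X \<le> Y")
  case True
  then obtain v where v: "Y = X + v" "v \<ge> 0" by (intro that[of "Y - X"]) auto
  have "min (X\<^sup>2) (Y\<^sup>2) = X\<^sup>2" using True assms by (simp add: power_mono)
  moreover have "0 \<le> 2 * (g1 - \<rho>) * X * v + g1 * v\<^sup>2" using assms v by simp
  ultimately show ?thesis unfolding v by (simp add: power2_eq_square algebra_simps)
next
  case False
  then obtain u where u: "X = Y + u" "u \<ge> 0" by (intro that[of "X - Y"]) auto
  have "min (X\<^sup>2) (Y\<^sup>2) = Y\<^sup>2" using False assms by (simp add: power_mono)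
  moreover have "0 \<le> 2 * (g2 - \<rho>) * Y * u + g2 * u\<^sup>2" using assms u by simp
  ultimately show ?thesis unfolding u by (simp add: power2_eq_square algebra_simps)
qed

lemma gram_det_pos_imp_denominator_pos:
  fixes g1 g2 \<rho> :: real
  assumes "g1 * g2 - \<rho>\<^sup>2 > 0" "\<rho> \<le> g1" "\<rho> \<le> g2"
  shows "g1 + g2 - 2 * \<rho> > 0"
proof (rule ccontr)
  assume "\<not> ?thesis"
  then have "g1 = \<rho>" "g2 = \<rho>" using assms(2,3) by linarith+
  then show False using assms(1) by (simp add: power2_eq_square)
qed

lemma min_cinner_le_maxmin_gain:
  fixes h1 h2 w :: "complex^'m"
  defines "g1 \<equiv> (norm h1)\<^sup>2" and "g2 \<equiv> (norm h2)\<^sup>2" and "\<rho> \<equiv> cmod (cinner h1 h2)"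
  assumes D: "g1 * g2 - \<rho>\<^sup>2 > 0" and g12: "g1 \<le> g2"
  shows "min ((cmod (cinner h1 w))\<^sup>2) ((cmod (cinner h2 w))\<^sup>2) \<le> (norm w)\<^sup>2 * maxmin_gain g1 g2 \<rho>"
proof -
  define X where "X = cmod (cinner h1 w)"
  define Y where "Y = cmod (cinner h2 w)"
  show ?thesis
  proof (cases "g1 < \<rho>")
    case True
    have "min (X\<^sup>2) (Y\<^sup>2) \<le> g1 * (norm w)\<^sup>2"
      using cmod_cinner_power2_le[of h1 w] unfolding X_def g1_def by linarith
    then show ?thesis using True g12 unfolding maxmin_gain_def X_def Y_def by (simp add: mult.commute)
  next
    case False
    have pos: "g1 + g2 - 2 * \<rho> > 0"
      using gram_det_pos_imp_denominator_pos[OF D] False g12 by simp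
    have "Re (cinner h1 h2 * cnj (cinner h1 w) * cinner h2 w)
            \<le> cmod (cinner h1 h2 * cnj (cinner h1 w) * cinner h2 w)"
      by (rule complex_Re_le_cmod)
    also have "\<dots> = \<rho> * X * Y" unfolding \<rho>_def X_def Y_def by (simp add: norm_mult)
    finally have "g2 * X\<^sup>2 + g1 * Y\<^sup>2 - 2 * \<rho> * X * Y \<le> (g1 * g2 - \<rho>\<^sup>2) * (norm w)\<^sup>2"
      using gram_quadratic_form_le[of h1 h2 w] D unfolding X_def Y_def g1_def g2_def \<rho>_def by simp
    moreover have "(g1 + g2 - 2 * \<rho>) * min (X\<^sup>2) (Y\<^sup>2) \<le> g2 * X\<^sup>2 + g1 * Y\<^sup>2 - 2 * \<rho> * X * Y"
    proof (rule min_power2_le_quadratic)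
      show "\<rho> \<le> g1" "\<rho> \<le> g2" using False g12 by linarith+
      show "0 \<le> g1" "0 \<le> g2" by (simp_all add: g1_def g2_def)
    qed (simp_all add: X_def Y_def)
    ultimately have "(g1 + g2 - 2 * \<rho>) * min (X\<^sup>2) (Y\<^sup>2) \<le> (g1 * g2 - \<rho>\<^sup>2) * (norm w)\<^sup>2"
      by linarith
    then show ?thesis
      using False g12 pos unfolding maxmin_gain_def X_def Y_def by (simp add: field_simps)
  qed
qed

lemma matched_beam_gains:
  fixes h1 h2 :: "complex^'m"
  assumes h1: "h1 \<noteq> 0" and P: "P \<ge> 0"
  defines "w \<equiv> of_real (sqrt (P / (norm h1)\<^sup>2)) *s h1"
  shows "(norm w)\<^sup>2 = P" and "(cmod (cinner h1 w))\<^sup>2 = P * (norm h1)\<^sup>2"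
    and "(cmod (cinner h2 w))\<^sup>2 = P * (cmod (cinner h1 h2))\<^sup>2 / (norm h1)\<^sup>2"
proof -
  define c where "c = sqrt (P / (norm h1)\<^sup>2)"
  have g1: "(norm h1)\<^sup>2 > 0" using h1 by simp
  have c2: "c\<^sup>2 = P / (norm h1)\<^sup>2" unfolding c_def using P g1 by simp
  have "complex_of_real ((norm w)\<^sup>2) = cinner w w" by (rule cinner_self[symmetric])
  also have "\<dots> = of_real (c\<^sup>2 * (norm h1)\<^sup>2)"
    unfolding w_def c_def[symmetric] cinner_smult_left cinner_smult_right
    unfolding cinner_self by (simp add: power2_eq_square)
  finally have "(norm w)\<^sup>2 = c\<^sup>2 * (norm h1)\<^sup>2" by (simp only: of_real_eq_iff)
  then show "(norm w)\<^sup>2 = P" using c2 g1 by simp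
  have "(cmod (cinner h1 w))\<^sup>2 = c\<^sup>2 * ((norm h1)\<^sup>2)\<^sup>2"
    unfolding w_def c_def[symmetric] cinner_smult_right cinner_self
    by (simp add: norm_mult norm_power power_mult_distrib)
  also have "\<dots> = P * (norm h1)\<^sup>2" unfolding c2 using g1 by (simp add: power2_eq_square)
  finally show "(cmod (cinner h1 w))\<^sup>2 = P * (norm h1)\<^sup>2" .
  show "(cmod (cinner h2 w))\<^sup>2 = P * (cmod (cinner h1 h2))\<^sup>2 / (norm h1)\<^sup>2"
    unfolding w_def c_def[symmetric] cinner_smult_right
    using c2 by (simp add: norm_mult power_mult_distrib cmod_cinner_commute[of h2 h1])
qed

lemma unit_phase:
  fixes z :: complex
  obtains \<omega> where "z * \<omega> = of_real (cmod z)" "cnj z = of_real (cmod z) * \<omega>" "cmod \<omega> = 1"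
proof
  define \<omega> where "\<omega> = (if z = 0 then 1 else cnj z / of_real (cmod z))"
  have zz: "z * cnj z = of_real ((cmod z)\<^sup>2)" by (rule complex_norm_square[symmetric])
  show "z * \<omega> = of_real (cmod z)"
    unfolding \<omega>_def using zz by (auto simp: field_simps power2_eq_square)
  show "cnj z = of_real (cmod z) * \<omega>" "cmod \<omega> = 1" unfolding \<omega>_def by (auto simp: norm_divide)
qed

lemma cinner_equalising_combination:
  fixes h1 h2 :: "complex^'m" and k \<omega> :: complex
  defines "g1 \<equiv> (norm h1)\<^sup>2" and "g2 \<equiv> (norm h2)\<^sup>2" and "z \<equiv> cinner h1 h2"
  defines "\<rho> \<equiv> cmod z"
  defines "w \<equiv> (k * of_real (g2 - \<rho>)) *s h1 + (k * (of_real g1 * \<omega> - cnj z)) *s h2"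
  assumes zw: "z * \<omega> = of_real \<rho>" and cz: "cnj z = of_real \<rho> * \<omega>"
  shows "cinner h1 w = k * of_real (g1 * g2 - \<rho>\<^sup>2)"
    and "cinner h2 w = k * of_real (g1 * g2 - \<rho>\<^sup>2) * \<omega>"
proof -
  have h11: "cinner h1 h1 = of_real g1" unfolding g1_def by (rule cinner_self)
  have h22: "cinner h2 h2 = of_real g2" unfolding g2_def by (rule cinner_self)
  have h21: "cinner h2 h1 = cnj z" unfolding z_def by (simp add: cnj_cinner)
  have zz: "z * cnj z = of_real (\<rho>\<^sup>2)" unfolding \<rho>_def by (rule complex_norm_square[symmetric])
  have D: "complex_of_real (g1 * g2 - \<rho>\<^sup>2) = of_real g1 * of_real g2 - z * cnj z"
    unfolding zz by simp
  have "cinner h1 w = k * (of_real g1 * of_real g2 - of_real g1 * of_real \<rho> + of_real g1 * (z * \<omega>) - z * cnj z)"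
    unfolding w_def cinner_add_right cinner_smult_right h11 z_def[symmetric] by (simp add: algebra_simps)
  also have "\<dots> = k * of_real (g1 * g2 - \<rho>\<^sup>2)" unfolding zw D by simp
  finally show "cinner h1 w = k * of_real (g1 * g2 - \<rho>\<^sup>2)" .
  have "cinner h2 w = k * (of_real g1 * of_real g2 * \<omega> - of_real \<rho> * cnj z)"
    unfolding w_def cinner_add_right cinner_smult_right h22 h21 by (simp add: algebra_simps)
  also have "\<dots> = k * of_real (g1 * g2 - \<rho>\<^sup>2) * \<omega>"
    unfolding cz D using zw by (simp add: algebra_simps)
  finally show "cinner h2 w = k * of_real (g1 * g2 - \<rho>\<^sup>2) * \<omega>" .
qed

text \<open>The phase \<open>\<omega>\<close> of \<open>h\<^sub>2\<^sup>H h\<^sub>1\<close> makes the two users add up coherently, so that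
  \<open>h\<^sub>1\<^sup>H w = \<tau>\<close> and \<open>h\<^sub>2\<^sup>H w = \<tau> \<omega>\<close>.\<close>
lemma equal_gain_beam:
  fixes h1 h2 :: "complex^'m"
  defines "g1 \<equiv> (norm h1)\<^sup>2" and "g2 \<equiv> (norm h2)\<^sup>2" and "z \<equiv> cinner h1 h2"
  defines "\<rho> \<equiv> cmod z"
  defines "D \<equiv> g1 * g2 - \<rho>\<^sup>2"
  assumes D: "D > 0" and pos: "g1 + g2 - 2 * \<rho> > 0" and P: "P \<ge> 0"
  obtains w where "(norm w)\<^sup>2 = P"
    "(cmod (cinner h1 w))\<^sup>2 = P * D / (g1 + g2 - 2 * \<rho>)"
    "(cmod (cinner h2 w))\<^sup>2 = P * D / (g1 + g2 - 2 * \<rho>)"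
proof -
  obtain \<omega> where zw: "z * \<omega> = of_real \<rho>" and cz: "cnj z = of_real \<rho> * \<omega>" and \<omega>: "cmod \<omega> = 1"
    unfolding \<rho>_def by (rule unit_phase)
  define \<tau> where "\<tau> = sqrt (P * D / (g1 + g2 - 2 * \<rho>))"
  define k :: complex where "k = of_real (\<tau> / D)"
  define a :: complex where "a = k * of_real (g2 - \<rho>)"
  define b where "b = k * (of_real g1 * \<omega> - cnj z)"
  define w where "w = a *s h1 + b *s h2"
  have t2: "\<tau>\<^sup>2 = P * D / (g1 + g2 - 2 * \<rho>)" unfolding \<tau>_def using P D pos by simp
  have kD: "k * of_real D = of_real \<tau>"
    unfolding k_def using D by (simp flip: of_real_mult del: of_real_divide)
  note inner = cinner_equalising_combination[of h1 h2 \<omega> k, folded g1_def g2_def z_def \<rho>_def,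
      OF zw cz, folded a_def b_def w_def D_def, unfolded kD]
  have ww: "\<omega> * cnj \<omega> = 1" using complex_norm_square[of \<omega>] \<omega> by simp
  have cnj_k: "cnj k = k" unfolding k_def by simp
  have "of_real ((norm w)\<^sup>2) = cnj a * cinner h1 w + cnj b * cinner h2 w"
    unfolding cinner_self[symmetric] by (subst (1) w_def) (simp only: cinner_add_left cinner_smult_left)
  also have "\<dots> = k * of_real \<tau> * (of_real (g2 - \<rho>) + of_real g1 * (\<omega> * cnj \<omega>) - z * \<omega>)"
    unfolding inner a_def b_def by (simp add: cnj_k algebra_simps)
  also have "\<dots> = of_real (\<tau>\<^sup>2 * (g1 + g2 - 2 * \<rho>) / D)"
    unfolding ww zw k_def by (simp add: power2_eq_square)
  finally have "(norm w)\<^sup>2 = P" unfolding t2 using D pos by (simp only: of_real_eq_iff) simp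
  moreover have "(cmod (cinner h1 w))\<^sup>2 = \<tau>\<^sup>2" "(cmod (cinner h2 w))\<^sup>2 = \<tau>\<^sup>2"
    unfolding inner using \<omega> by (simp_all add: norm_mult)
  ultimately show ?thesis using that unfolding t2 by simp
qed

lemma maxmin_gain_attained:
  fixes h1 h2 :: "complex^'m"
  defines "g1 \<equiv> (norm h1)\<^sup>2" and "g2 \<equiv> (norm h2)\<^sup>2" and "\<rho> \<equiv> cmod (cinner h1 h2)"
  assumes D: "g1 * g2 - \<rho>\<^sup>2 > 0" and g12: "g1 \<le> g2" and P: "P \<ge> 0"
  obtains w where "(norm w)\<^sup>2 = P"
    "min ((cmod (cinner h1 w))\<^sup>2) ((cmod (cinner h2 w))\<^sup>2) = P * maxmin_gain g1 g2 \<rho>"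
proof (cases "g1 < \<rho>")
  case True
  have h1: "h1 \<noteq> 0" using D unfolding g1_def by auto
  note beam = matched_beam_gains(1,2)[OF h1 P] matched_beam_gains(3)[OF h1 P, of h2]
  have g1: "g1 > 0" using h1 unfolding g1_def by simp
  then have "g1 * g1 \<le> \<rho> * \<rho>" using True by (intro mult_mono) auto
  then have "P * (g1 * g1) \<le> P * (\<rho> * \<rho>)" using P by (rule mult_left_mono)
  then have "P * g1 \<le> P * \<rho>\<^sup>2 / g1" using g1 by (simp add: field_simps power2_eq_square)
  then show ?thesis
    using that[OF beam(1)] beam(2,3) True g12 unfolding maxmin_gain_def g1_def \<rho>_def by simp
next
  case False
  have "g1 + g2 - 2 * \<rho> > 0"
    using gram_det_pos_imp_denominator_pos[OF D] False g12 by simp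
  then obtain w where w: "(norm w)\<^sup>2 = P"
    "(cmod (cinner h1 w))\<^sup>2 = P * (g1 * g2 - \<rho>\<^sup>2) / (g1 + g2 - 2 * \<rho>)"
    "(cmod (cinner h2 w))\<^sup>2 = P * (g1 * g2 - \<rho>\<^sup>2) / (g1 + g2 - 2 * \<rho>)"
    using equal_gain_beam[of h1 h2 P, folded g1_def g2_def \<rho>_def] D P by blast
  then show ?thesis using that[OF w(1)] False g12 unfolding maxmin_gain_def by simp
qed

lemma Sup_min_cinner_eq:
  fixes h1 h2 :: "complex^'m"
  defines "g1 \<equiv> (norm h1)\<^sup>2" and "g2 \<equiv> (norm h2)\<^sup>2" and "\<rho> \<equiv> cmod (cinner h1 h2)"
  assumes D: "g1 * g2 - \<rho>\<^sup>2 > 0" and g12: "g1 \<le> g2" and P: "P \<ge> 0"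
  shows "Sup {min ((cmod (cinner h1 w))\<^sup>2) ((cmod (cinner h2 w))\<^sup>2) | w. (norm w)\<^sup>2 = P}
      = P * maxmin_gain g1 g2 \<rho>"
proof (rule cSup_eq_maximum)
  obtain w where "(norm w)\<^sup>2 = P"
    "min ((cmod (cinner h1 w))\<^sup>2) ((cmod (cinner h2 w))\<^sup>2) = P * maxmin_gain g1 g2 \<rho>"
    using maxmin_gain_attained[of h1 h2 P] D g12 P unfolding g1_def g2_def \<rho>_def by blast
  then show "P * maxmin_gain g1 g2 \<rho>
      \<in> {min ((cmod (cinner h1 w))\<^sup>2) ((cmod (cinner h2 w))\<^sup>2) | w. (norm w)\<^sup>2 = P}"
    by (metis (mono_tags, lifting) mem_Collect_eq)
qed (use min_cinner_le_maxmin_gain[of h1 h2] D g12 in \<open>auto simp: g1_def g2_def \<rho>_def\<close>)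

lemma snr_md_eq:
  fixes h1 h2 :: "complex^'m"
  defines "g1 \<equiv> (norm h1)\<^sup>2" and "g2 \<equiv> (norm h2)\<^sup>2" and "\<rho> \<equiv> cmod (cinner h1 h2)"
  assumes D: "g1 * g2 - \<rho>\<^sup>2 > 0" and P: "P > 0"
  shows "snr_md P \<sigma> h1 h2 = P * maxmin_gain g1 g2 \<rho> / \<sigma>\<^sup>2"
proof (cases "g1 \<le> g2")
  case True
  then show ?thesis
    using Sup_min_cinner_eq[of h1 h2 P] D P unfolding snr_md_def g1_def g2_def \<rho>_def by simp
next
  case False
  have "{min ((cmod (cinner h1 w))\<^sup>2) ((cmod (cinner h2 w))\<^sup>2) | w. (norm w)\<^sup>2 = P}
      = {min ((cmod (cinner h2 w))\<^sup>2) ((cmod (cinner h1 w))\<^sup>2) | w. (norm w)\<^sup>2 = P}"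
    by (simp add: min.commute)
  then show ?thesis
    using Sup_min_cinner_eq[of h2 h1 P] D P False maxmin_gain_commute
    unfolding snr_md_def g1_def g2_def \<rho>_def cmod_cinner_commute[of h2]
    by (simp add: mult.commute)
qed

section \<open>The zero-forcing SNR\<close>

lemma matrix_inv_eqI:
  fixes G :: "'a::comm_ring_1^'n^'n"
  assumes "G ** M = mat 1" "M ** G = mat 1"
  shows "matrix_inv G = M"
proof -
  have "G ** matrix_inv G = mat 1 \<and> matrix_inv G ** G = mat 1"
    unfolding matrix_inv_def by (rule someI[of _ M]) (use assms in blast)
  then have "matrix_inv G = matrix_inv G ** (G ** M)" "matrix_inv G ** G = mat 1"
    using assms by simp_all
  then show ?thesis by (simp add: matrix_mul_assoc)
qed

lemma snr_zf_eq:
  fixes h1 h2 :: "complex^'m"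
  defines "g1 \<equiv> (norm h1)\<^sup>2" and "g2 \<equiv> (norm h2)\<^sup>2" and "z \<equiv> cinner h1 h2"
  defines "D \<equiv> g1 * g2 - (cmod z)\<^sup>2"
  assumes D: "D > 0"
  shows "snr_zf P \<sigma> h1 h2 = P * D / (\<sigma>\<^sup>2 * (g1 + g2))"
proof -
  have h11: "cinner h1 h1 = of_real g1" unfolding g1_def by (rule cinner_self)
  have h22: "cinner h2 h2 = of_real g2" unfolding g2_def by (rule cinner_self)
  have h21: "cinner h2 h1 = cnj z" unfolding z_def by (simp add: cnj_cinner)
  have n12: "(2::2) \<noteq> 1" by simp
  define G where "G = cadj (chanmat h1 h2) ** chanmat h1 h2"
  have G: "G $ 1 $ 1 = of_real g1" "G $ 1 $ 2 = z" "G $ 2 $ 1 = cnj z" "G $ 2 $ 2 = of_real g2"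
    unfolding G_def matrix_matrix_mult_def cadj_def chanmat_def
    by (simp_all add: h11[symmetric] h22[symmetric] h21[symmetric] z_def cinner_def n12 mult.commute)
  define M :: "complex^2^2" where "M = (\<chi> i j. (if i = 1 then (if j = 1 then of_real g2 else - z)
         else (if j = 1 then - cnj z else of_real g1)) / of_real D)"
  have M: "M $ 1 $ 1 = of_real g2 / of_real D" "M $ 1 $ 2 = - z / of_real D"
     "M $ 2 $ 1 = - cnj z / of_real D" "M $ 2 $ 2 = of_real g1 / of_real D"
    unfolding M_def by (simp_all add: n12)
  have Dn: "complex_of_real D \<noteq> 0" using D by simp
  have Dc: "of_real g1 * of_real g2 = of_real D + z * cnj z"
           "of_real g2 * of_real g1 = of_real D + z * cnj z"
    unfolding D_def complex_norm_square[symmetric] by simp_all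
  have "G ** M = mat 1" "M ** G = mat 1"
    unfolding vec_eq_iff forall_2 matrix_matrix_mult_def mat_def
    using Dn by (simp_all add: sum_2 G M n12 add_divide_distrib[symmetric]
        diff_divide_distrib[symmetric] Dc mult.commute[of _ "cnj z"])
  then have inv: "matrix_inv G = M" by (rule matrix_inv_eqI)
  have "(\<Sum>i\<in>UNIV. matrix_inv G $ i $ i) = of_real ((g1 + g2) / D)"
    unfolding inv sum_2 M by (simp add: add_divide_distrib)
  then show ?thesis unfolding snr_zf_def G_def[symmetric] using D by simp
qed

lemma snr_ratio_eq:
  fixes h1 h2 :: "complex^'m"
  defines "g1 \<equiv> (norm h1)\<^sup>2" and "g2 \<equiv> (norm h2)\<^sup>2" and "\<rho> \<equiv> cmod (cinner h1 h2)"
  assumes D: "g1 * g2 - \<rho>\<^sup>2 > 0" and P: "P > 0" and \<sigma>: "\<sigma> > 0"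
  shows "snr_md P \<sigma> h1 h2 / snr_zf P \<sigma> h1 h2
           = maxmin_gain g1 g2 \<rho> * (g1 + g2) / (g1 * g2 - \<rho>\<^sup>2)"
proof -
  have "g1 \<noteq> 0" using D by auto
  then have S: "g1 + g2 > 0" unfolding g1_def g2_def by (simp add: add_pos_nonneg)
  have "snr_md P \<sigma> h1 h2 = P * maxmin_gain g1 g2 \<rho> / \<sigma>\<^sup>2"
    using snr_md_eq[of h1 h2 P \<sigma>] D P unfolding g1_def g2_def \<rho>_def by simp
  moreover have "snr_zf P \<sigma> h1 h2 = P * (g1 * g2 - \<rho>\<^sup>2) / (\<sigma>\<^sup>2 * (g1 + g2))"
    using snr_zf_eq[of h1 h2 P \<sigma>] D unfolding g1_def g2_def \<rho>_def by simp
  ultimately show ?thesis using D P \<sigma> S by simp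
qed

section \<open>Gram data from the eigendecomposition\<close>

lemma unitary_eigen_column:
  fixes h1 h2 :: "complex^'m" and V :: "complex^'m^'m" and d :: "'m \<Rightarrow> complex" and i :: 'm
  assumes V: "unitary V" and eig: "outer h1 - outer h2 = V ** cdiag d ** cadj V"
  defines "v \<equiv> (\<chi> j. V $ j $ i)"
  shows "cinner v v = 1"
    and "(cadj V *v h1) $ i = cinner v h1"
    and "cinner h1 v *s h1 - cinner h2 v *s h2 = d i *s v"
proof -
  have VV: "cadj V ** V = mat 1" using V unfolding unitary_def by simp
  have "(cadj V ** V) $ i $ i = 1" unfolding VV by (simp add: mat_def)
  then show "cinner v v = 1" unfolding matrix_matrix_mult_def cadj_def cinner_def v_def by simp
  show "(cadj V *v h1) $ i = cinner v h1"
    unfolding matrix_vector_mult_def cadj_def cinner_def v_def by simp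
  have AV: "(outer h1 - outer h2) ** V = V ** cdiag d"
    unfolding eig by (metis VV matrix_mul_assoc matrix_mul_rid)
  show "cinner h1 v *s h1 - cinner h2 v *s h2 = d i *s v"
  proof (subst vec_eq_iff, intro allI)
    fix j
    have "((outer h1 - outer h2) ** V) $ j $ i = h1 $ j * cinner h1 v - h2 $ j * cinner h2 v"
      unfolding matrix_matrix_mult_def outer_def cinner_def v_def
      by (simp add: sum_distrib_left algebra_simps sum_subtractf)
    moreover have "(V ** cdiag d) $ j $ i = V $ j $ i * d i"
      unfolding matrix_matrix_mult_def cdiag_def by (simp add: if_distrib cong: if_cong)
    ultimately show "(cinner h1 v *s h1 - cinner h2 v *s h2) $ j = (d i *s v) $ j"
      using AV unfolding v_def by (simp add: mult.commute)
  qed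
qed

lemma trace_cdiag: "trace (cdiag d) = (\<Sum>i\<in>UNIV. d i)"
  unfolding trace_def cdiag_def by simp

lemma cdiag_mult: "cdiag d ** cdiag e = cdiag (\<lambda>i. d i * e i)"
proof -
  have "(\<Sum>k\<in>UNIV. (if i = k then d i else 0) * (if k = j then e k else 0))
        = (if i = j then d i * e i else 0)" for i j :: 'a
  proof -
    have "(\<Sum>k\<in>UNIV. (if i = k then d i else 0) * (if k = j then e k else 0))
       = (\<Sum>k\<in>UNIV. if k = i then d i * (if i = j then e i else 0) else 0)"
      by (intro sum.cong refl) auto
    then show ?thesis by simp
  qed
  then show ?thesis unfolding cdiag_def matrix_matrix_mult_def by (simp add: vec_eq_iff)
qed

lemma trace_unitary_conj:
  fixes V X :: "complex^'m^'m"
  assumes "unitary V"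
  shows "trace (V ** X ** cadj V) = trace X"
  using assms unfolding unitary_def
  by (metis matrix_mul_assoc matrix_mul_lid trace_mul_sym)

lemma trace_outer_diff:
  fixes h1 h2 :: "complex^'m"
  shows "trace (outer h1 - outer h2) = cinner h1 h1 - cinner h2 h2"
  unfolding trace_def outer_def cinner_def by (simp add: sum_subtractf mult.commute)

lemma trace_outer_diff_square:
  fixes h1 h2 :: "complex^'m"
  shows "trace ((outer h1 - outer h2) ** (outer h1 - outer h2))
    = (cinner h1 h1)\<^sup>2 + (cinner h2 h2)\<^sup>2 - 2 * (cinner h1 h2 * cinner h2 h1)"
proof -
  have "trace ((outer h1 - outer h2) ** (outer h1 - outer h2)) = (\<Sum>i\<in>UNIV. \<Sum>k\<in>UNIV.
      (h1$i * cnj (h1$i)) * (h1$k * cnj (h1$k)) - (cnj (h2$i) * h1$i) * (cnj (h1$k) * h2$k)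
      - (cnj (h1$i) * h2$i) * (cnj (h2$k) * h1$k) + (h2$i * cnj (h2$i)) * (h2$k * cnj (h2$k)))"
    unfolding trace_def matrix_matrix_mult_def outer_def
    by (intro sum.cong refl) (simp add: algebra_simps)
  also have "\<dots> = (\<Sum>i\<in>UNIV. h1$i * cnj (h1$i)) * (\<Sum>k\<in>UNIV. h1$k * cnj (h1$k))
      - (\<Sum>i\<in>UNIV. cnj (h2$i) * h1$i) * (\<Sum>k\<in>UNIV. cnj (h1$k) * h2$k)
      - (\<Sum>i\<in>UNIV. cnj (h1$i) * h2$i) * (\<Sum>k\<in>UNIV. cnj (h2$k) * h1$k)
      + (\<Sum>i\<in>UNIV. h2$i * cnj (h2$i)) * (\<Sum>k\<in>UNIV. h2$k * cnj (h2$k))"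
    unfolding sum_product by (simp only: sum.distrib sum_subtractf)
  also have "\<dots> = (cinner h1 h1)\<^sup>2 + (cinner h2 h2)\<^sup>2 - 2 * (cinner h1 h2 * cinner h2 h1)"
    unfolding cinner_def power2_eq_square by (simp add: mult.commute)
  finally show ?thesis .
qed

lemma spectral_trace_identities:
  fixes h1 h2 :: "complex^'m" and V :: "complex^'m^'m" and d :: "'m \<Rightarrow> complex"
  assumes V: "unitary V" and eig: "outer h1 - outer h2 = V ** cdiag d ** cadj V"
  shows "cinner h1 h1 - cinner h2 h2 = (\<Sum>i\<in>UNIV. d i)"
    and "(cinner h1 h1)\<^sup>2 + (cinner h2 h2)\<^sup>2 - 2 * (cinner h1 h2 * cinner h2 h1) = (\<Sum>i\<in>UNIV. d i * d i)"
proof -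
  have VV: "cadj V ** V = mat 1" using V unfolding unitary_def by simp
  have sq: "(outer h1 - outer h2) ** (outer h1 - outer h2) = V ** cdiag (\<lambda>i. d i * d i) ** cadj V"
    unfolding eig cdiag_mult[symmetric] by (metis VV matrix_mul_assoc matrix_mul_rid)
  show "cinner h1 h1 - cinner h2 h2 = (\<Sum>i\<in>UNIV. d i)"
    using trace_outer_diff[of h1 h2] unfolding eig trace_unitary_conj[OF V] trace_cdiag by simp
  show "(cinner h1 h1)\<^sup>2 + (cinner h2 h2)\<^sup>2 - 2 * (cinner h1 h2 * cinner h2 h1) = (\<Sum>i\<in>UNIV. d i * d i)"
    using trace_outer_diff_square[of h1 h2] unfolding sq trace_unitary_conj[OF V] trace_cdiag by simp
qed

lemma eigvec_inner_relations:
  fixes h1 h2 v :: "complex^'m"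
  assumes vec: "p *s h1 - q *s h2 = of_real lam *s v"
    and p: "cinner h1 v = p" and q: "cinner h2 v = q" and vv: "cinner v v = 1"
  shows "(cmod (cinner h1 h2))\<^sup>2 * (cmod q)\<^sup>2 = ((norm h1)\<^sup>2 - lam)\<^sup>2 * (cmod p)\<^sup>2"
    and "(cmod (cinner h1 h2))\<^sup>2 * (cmod p)\<^sup>2 = ((norm h2)\<^sup>2 + lam)\<^sup>2 * (cmod q)\<^sup>2"
    and "(cmod p)\<^sup>2 - (cmod q)\<^sup>2 = lam"
proof -
  have "cinner h1 (p *s h1 - q *s h2) = cinner h1 (of_real lam *s v)" using vec by (rule arg_cong)
  then have "q * cinner h1 h2 = of_real ((norm h1)\<^sup>2 - lam) * p"
    unfolding cinner_diff_right cinner_smult_right cinner_self p by (simp add: algebra_simps)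
  then have "cmod (q * cinner h1 h2) = cmod (of_real ((norm h1)\<^sup>2 - lam) * p)" by (rule arg_cong)
  then have "cmod q * cmod (cinner h1 h2) = \<bar>(norm h1)\<^sup>2 - lam\<bar> * cmod p"
    unfolding norm_mult norm_of_real .
  then have "(cmod q * cmod (cinner h1 h2))\<^sup>2 = (\<bar>(norm h1)\<^sup>2 - lam\<bar> * cmod p)\<^sup>2" by simp
  then show "(cmod (cinner h1 h2))\<^sup>2 * (cmod q)\<^sup>2 = ((norm h1)\<^sup>2 - lam)\<^sup>2 * (cmod p)\<^sup>2"
    unfolding power_mult_distrib power2_abs by (simp add: ac_simps)
  have "cinner h2 (p *s h1 - q *s h2) = cinner h2 (of_real lam *s v)" using vec by (rule arg_cong)
  then have "p * cnj (cinner h1 h2) = of_real ((norm h2)\<^sup>2 + lam) * q"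
    unfolding cinner_diff_right cinner_smult_right cinner_self q cnj_cinner by (simp add: algebra_simps)
  then have "cmod (p * cnj (cinner h1 h2)) = cmod (of_real ((norm h2)\<^sup>2 + lam) * q)" by (rule arg_cong)
  then have "cmod p * cmod (cinner h1 h2) = \<bar>(norm h2)\<^sup>2 + lam\<bar> * cmod q"
    unfolding norm_mult norm_of_real complex_mod_cnj .
  then have "(cmod p * cmod (cinner h1 h2))\<^sup>2 = (\<bar>(norm h2)\<^sup>2 + lam\<bar> * cmod q)\<^sup>2" by simp
  then show "(cmod (cinner h1 h2))\<^sup>2 * (cmod p)\<^sup>2 = ((norm h2)\<^sup>2 + lam)\<^sup>2 * (cmod q)\<^sup>2"
    unfolding power_mult_distrib power2_abs by (simp add: ac_simps)
  have "cinner v (p *s h1 - q *s h2) = cinner v (of_real lam *s v)" using vec by (rule arg_cong)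
  moreover have "cinner v h1 = cnj p" "cinner v h2 = cnj q"
    unfolding p[symmetric] q[symmetric] cnj_cinner by simp_all
  ultimately have "p * cnj p - q * cnj q = of_real lam"
    unfolding cinner_diff_right cinner_smult_right vv by simp
  then have "complex_of_real ((cmod p)\<^sup>2 - (cmod q)\<^sup>2) = of_real lam"
    unfolding of_real_diff complex_norm_square .
  then show "(cmod p)\<^sup>2 - (cmod q)\<^sup>2 = lam" by (simp only: of_real_eq_iff)
qed

lemma gram_from_eigen_relations:
  fixes l1 l2 g1 g2 \<rho> t u :: real
  assumes l1: "l1 > 0" and l2: "l2 > 0" and u0: "u \<ge> 0"
    and E1: "g1 - g2 = l1 - l2"
    and E2: "g1\<^sup>2 + g2\<^sup>2 - 2 * \<rho>\<^sup>2 = l1\<^sup>2 + l2\<^sup>2"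
    and E3: "t - u = l1"
    and E4: "\<rho>\<^sup>2 * u = (g1 - l1)\<^sup>2 * t"
    and E5: "\<rho>\<^sup>2 * t = (g2 + l1)\<^sup>2 * u"
  shows "g1 * g2 - \<rho>\<^sup>2 = l1 * l2" and "l1 * (g1 + l2) = t * (l1 + l2)" and "l1 \<le> t"
proof -
  have g2: "g2 = g1 - l1 + l2" using E1 by simp
  have "(g1 - g2)\<^sup>2 = (l1 - l2)\<^sup>2" using E1 by simp
  then show D: "g1 * g2 - \<rho>\<^sup>2 = l1 * l2" using E2 by (simp add: power2_eq_square algebra_simps)
  show "l1 \<le> t" using E3 u0 by simp
  have r2: "\<rho>\<^sup>2 = (g1 - l1) * (g1 + l2)" using D g2 by (simp add: algebra_simps power2_eq_square)
  have key: "(g1 - l1) * (l1 * (g1 + l2) - t * (l1 + l2)) = 0"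
    using E4 E3 unfolding r2 by (simp add: power2_eq_square algebra_simps)
  show "l1 * (g1 + l2) = t * (l1 + l2)"
  proof (cases "g1 = l1")
    case True
    then have "(g2 + l1)\<^sup>2 * u = 0" using E5 r2 by simp
    moreover have "g2 + l1 > 0" using True g2 l1 l2 by simp
    ultimately have "t = l1" using E3 by simp
    then show ?thesis using True by (simp add: algebra_simps)
  next
    case False
    then show ?thesis using key by simp
  qed
qed

text \<open>\<open>t\<close> is \<open>|h\<^sub>1\<^sup>H v|\<^sup>2\<close> for the \<open>\<lambda>\<^sub>1\<close>-eigenvector \<open>v\<close>, so \<open>cos\<^sup>2 \<theta> = \<lambda>\<^sub>1 / t\<close>.\<close>
lemma gram_from_eigendecomposition:
  fixes h1 h2 :: "complex^'m" and V :: "complex^'m^'m" and lam1 lam2 :: real and i1 i2 :: 'm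
  defines "g1 \<equiv> (norm h1)\<^sup>2" and "g2 \<equiv> (norm h2)\<^sup>2" and "\<rho> \<equiv> cmod (cinner h1 h2)"
    and "t \<equiv> (cmod ((cadj V *v h1) $ i1))\<^sup>2"
  assumes l1: "lam1 > 0" and l2: "lam2 > 0" and idx: "i1 \<noteq> i2" and V: "unitary V"
    and eig: "outer h1 - outer h2 =
      V ** cdiag (\<lambda>i. if i = i1 then complex_of_real lam1
                     else if i = i2 then - complex_of_real lam2 else 0) ** cadj V"
  shows "g1 - g2 = lam1 - lam2" and "g1 * g2 - \<rho>\<^sup>2 = lam1 * lam2"
    and "lam1 * (g1 + lam2) = t * (lam1 + lam2)" and "lam1 \<le> t"
proof -
  define d :: "'m \<Rightarrow> complex" where
    "d = (\<lambda>i. if i = i1 then complex_of_real lam1 else if i = i2 then - complex_of_real lam2 else 0)"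
  have "d = (\<lambda>i. (if i = i1 then of_real lam1 else 0) + (if i = i2 then - of_real lam2 else 0))"
    "(\<lambda>i. d i * d i) = (\<lambda>i. (if i = i1 then of_real (lam1\<^sup>2) else 0) + (if i = i2 then of_real (lam2\<^sup>2) else 0))"
    using idx by (auto simp: d_def power2_eq_square)
  then have sum_d: "(\<Sum>i\<in>UNIV. d i) = of_real (lam1 - lam2)"
    and sum_d2: "(\<Sum>i\<in>UNIV. d i * d i) = of_real (lam1\<^sup>2 + lam2\<^sup>2)"
    by (simp_all only: sum.distrib) simp_all
  note tr = spectral_trace_identities[OF V eig[folded d_def]]
  have h12: "cinner h1 h2 * cinner h2 h1 = of_real (\<rho>\<^sup>2)"
    unfolding \<rho>_def cnj_cinner[of h1 h2, symmetric] by (rule complex_norm_square[symmetric])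
  have E1: "g1 - g2 = lam1 - lam2"
    using tr(1) unfolding sum_d cinner_self g1_def[symmetric] g2_def[symmetric]
    by (metis of_real_diff of_real_eq_iff)
  have "complex_of_real (g1\<^sup>2 + g2\<^sup>2 - 2 * \<rho>\<^sup>2) = of_real (lam1\<^sup>2 + lam2\<^sup>2)"
    using tr(2) unfolding sum_d2 cinner_self h12 g1_def[symmetric] g2_def[symmetric] by simp
  then have E2: "g1\<^sup>2 + g2\<^sup>2 - 2 * \<rho>\<^sup>2 = lam1\<^sup>2 + lam2\<^sup>2" by (simp only: of_real_eq_iff)
  define v where "v = (\<chi> j. V $ j $ i1)"
  note col = unitary_eigen_column[OF V eig[folded d_def], of i1, folded v_def]
  have "cinner h1 v *s h1 - cinner h2 v *s h2 = of_real lam1 *s v" using col(3) by (simp add: d_def)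
  note rel = eigvec_inner_relations[OF this refl refl col(1), folded g1_def g2_def \<rho>_def]
  have t: "t = (cmod (cinner h1 v))\<^sup>2"
    unfolding t_def col(2) cmod_cinner_commute ..
  show "g1 - g2 = lam1 - lam2" "g1 * g2 - \<rho>\<^sup>2 = lam1 * lam2"
    "lam1 * (g1 + lam2) = t * (lam1 + lam2)" "lam1 \<le> t"
    using E1 gram_from_eigen_relations[OF l1 l2 _ E1 E2 rel(3) rel(1) rel(2)] unfolding t by simp_all
qed

section \<open>The gain ratio in terms of \<open>\<kappa>\<close> and \<open>\<theta>\<close>\<close>

lemma gram_entries_by_angle:
  fixes l1 l2 g1 g2 \<rho> t :: real
  assumes l1: "l1 > 0" and l2: "l2 > 0" and r0: "\<rho> \<ge> 0" and tl: "l1 \<le> t"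
    and D: "g1 * g2 - \<rho>\<^sup>2 = l1 * l2" and G: "l1 * (g1 + l2) = t * (l1 + l2)"
    and E1: "g1 - g2 = l1 - l2"
  defines "c2 \<equiv> l1 / t"
  defines "s \<equiv> sqrt (1 - c2)"
  shows "c2 = 1 - s\<^sup>2" "0 \<le> s" "s < 1" "0 < c2" "c2 \<le> 1"
    "g1 = (l1 + l2 * s\<^sup>2) / c2" "g2 = (l2 + l1 * s\<^sup>2) / c2" "\<rho> = (l1 + l2) * s / c2"
proof -
  have t0: "t > 0" using l1 tl by simp
  show c0: "c2 > 0" unfolding c2_def using l1 t0 by simp
  show c1: "c2 \<le> 1" unfolding c2_def using tl t0 by simp
  show cs: "c2 = 1 - s\<^sup>2" unfolding s_def using c1 by simp
  show s0: "0 \<le> s" unfolding s_def using c1 by simp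
  show "s < 1" unfolding s_def using c0 c1 by simp
  have "g1 + l2 = (l1 + l2) / c2" using G l1 t0 unfolding c2_def by (simp add: field_simps)
  then show g1: "g1 = (l1 + l2 * s\<^sup>2) / c2" using c0 unfolding cs by (simp add: field_simps)
  show g2: "g2 = (l2 + l1 * s\<^sup>2) / c2"
    using E1 c0 unfolding g1 cs by (simp add: field_simps)
  have "\<rho>\<^sup>2 = ((l1 + l2 * s\<^sup>2) * (l2 + l1 * s\<^sup>2) - l1 * l2 * c2\<^sup>2) / c2\<^sup>2"
    using D c0 unfolding g1 g2 by (simp add: field_simps power2_eq_square)
  also have "\<dots> = ((l1 + l2) * s / c2)\<^sup>2"
    unfolding power_divide[symmetric] by (simp add: cs power2_eq_square algebra_simps)
  finally show "\<rho> = (l1 + l2) * s / c2"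
    using r0 c0 l1 l2 s0 by (simp add: power2_eq_iff_nonneg)
qed

lemma gain_ratio_by_angle:
  fixes l1 l2 s c2 g1 g2 \<rho> \<kappa> :: real
  assumes l1: "l1 > 0" and l2: "l2 > 0" and s0: "0 \<le> s" and s1: "s < 1"
    and c2: "c2 = 1 - s\<^sup>2"
    and g1: "g1 = (l1 + l2 * s\<^sup>2) / c2" and g2: "g2 = (l2 + l1 * s\<^sup>2) / c2"
    and r: "\<rho> = (l1 + l2) * s / c2"
    and D: "g1 * g2 - \<rho>\<^sup>2 = l1 * l2"
    and k: "\<kappa> = l1 / l2"
  defines "R \<equiv> maxmin_gain g1 g2 \<rho> * (g1 + g2) / (l1 * l2)"
  shows "(0 < \<kappa> \<and> \<kappa> \<le> 1 \<and> 0 \<le> s \<and> s \<le> \<kappa> \<longrightarrow> R = (1 + s\<^sup>2) / (1 - s)\<^sup>2)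
       \<and> (0 < \<kappa> \<and> \<kappa> \<le> 1 \<and> \<kappa> < s \<and> s < 1 \<longrightarrow>
            R = (1 + s\<^sup>2) * (\<kappa> + s\<^sup>2) * (1 + 1 / \<kappa>) / c2\<^sup>2)
       \<and> (\<kappa> > 1 \<and> 0 \<le> s \<and> s \<le> 1 / \<kappa> \<longrightarrow> R = (1 + s\<^sup>2) / (1 - s)\<^sup>2)
       \<and> (\<kappa> > 1 \<and> 1 / \<kappa> < s \<and> s < 1 \<longrightarrow>
            R = (1 + s\<^sup>2) * (1 / \<kappa> + s\<^sup>2) * (1 + \<kappa>) / c2\<^sup>2)"
proof -
  have c0: "c2 > 0" unfolding c2 using s0 s1 by (simp add: power_less_one_iff abs_square_less_1)
  have sum: "g1 + g2 = (l1 + l2) * (1 + s\<^sup>2) / c2"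
    unfolding g1 g2 using c0 by (simp add: field_simps)
  have den: "g1 + g2 - 2 * \<rho> = (l1 + l2) * (1 - s)\<^sup>2 / c2"
    unfolding g1 g2 r using c0 by (simp add: field_simps power2_eq_square)
  have d12: "g1 - g2 = l1 - l2"
  proof -
    have "g1 - g2 = ((l1 + l2 * s\<^sup>2) - (l2 + l1 * s\<^sup>2)) / c2"
      unfolding g1 g2 by (simp add: diff_divide_distrib)
    also have "\<dots> = (l1 - l2) * c2 / c2" unfolding c2 by (simp add: algebra_simps)
    finally show ?thesis using c0 by simp
  qed
  have rg1: "\<rho> - g1 = (1 - s) * (l2 * s - l1) / c2"
    unfolding g1 r using c0 by (simp add: field_simps power2_eq_square)
  have rg2: "\<rho> - g2 = (1 - s) * (l1 * s - l2) / c2"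
    unfolding g2 r using c0 by (simp add: field_simps power2_eq_square)
  have equal_gain: "R = (1 + s\<^sup>2) / (1 - s)\<^sup>2" if "\<not> min g1 g2 < \<rho>"
  proof -
    have cancel: "L / (A * B / C) * (A * X / C) / L = X / B"
      if "L \<noteq> 0" "A \<noteq> 0" "B \<noteq> 0" "C \<noteq> 0" for L A B C X :: real
      using that by (simp add: field_simps)
    have "(1 - s)\<^sup>2 \<noteq> 0" using s1 by simp
    then show ?thesis
      using that cancel[of "l1 * l2" "l1 + l2" "(1 - s)\<^sup>2" c2 "1 + s\<^sup>2"] l1 l2 c0
      unfolding R_def maxmin_gain_def D den unfolding sum by simp
  qed
  have c22: "c2\<^sup>2 = c2 * c2" by (simp add: power2_eq_square)
  show ?thesis
  proof (intro conjI impI)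
    assume "0 < \<kappa> \<and> \<kappa> \<le> 1 \<and> 0 \<le> s \<and> s \<le> \<kappa>"
    then have l12: "l1 \<le> l2" and "l2 * s \<le> l1" using l2 unfolding k by (auto simp: field_simps)
    then have "(1 - s) * (l2 * s - l1) \<le> 0" using s1 by (simp add: mult_nonneg_nonpos)
    then have "\<rho> - g1 \<le> 0" unfolding rg1 using c0 by (simp add: divide_nonpos_pos)
    with l12 d12 have "\<not> min g1 g2 < \<rho>" by simp
    then show "R = (1 + s\<^sup>2) / (1 - s)\<^sup>2" by (rule equal_gain)
  next
    assume "0 < \<kappa> \<and> \<kappa> \<le> 1 \<and> \<kappa> < s \<and> s < 1"
    then have "l1 \<le> l2" "l2 * s > l1" using l2 unfolding k by (simp_all add: field_simps)
    moreover have "\<rho> - g1 > 0" unfolding rg1 using \<open>l2 * s > l1\<close> s1 c0 by simp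
    ultimately have R: "R = g1 * (g1 + g2) / (l1 * l2)" using d12 unfolding R_def maxmin_gain_def by simp
    have e: "\<kappa> + s\<^sup>2 = (l1 + l2 * s\<^sup>2) / l2" "1 + 1 / \<kappa> = (l1 + l2) / l1"
      unfolding k using l1 l2 by (simp_all add: field_simps)
    show "R = (1 + s\<^sup>2) * (\<kappa> + s\<^sup>2) * (1 + 1 / \<kappa>) / c2\<^sup>2"
      unfolding R e unfolding sum unfolding g1 c22 using c0 l1 l2 by (simp add: field_simps)
  next
    assume "\<kappa> > 1 \<and> 0 \<le> s \<and> s \<le> 1 / \<kappa>"
    then have l21: "l2 < l1" and "l1 * s \<le> l2" using l1 l2 unfolding k by (auto simp: field_simps)
    then have "(1 - s) * (l1 * s - l2) \<le> 0" using s1 by (simp add: mult_nonneg_nonpos)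
    then have "\<rho> - g2 \<le> 0" unfolding rg2 using c0 by (simp add: divide_nonpos_pos)
    with l21 d12 have "\<not> min g1 g2 < \<rho>" by simp
    then show "R = (1 + s\<^sup>2) / (1 - s)\<^sup>2" by (rule equal_gain)
  next
    assume "\<kappa> > 1 \<and> 1 / \<kappa> < s \<and> s < 1"
    then have "l2 < l1" "l1 * s > l2" using l1 l2 unfolding k by (simp_all add: field_simps)
    moreover have "\<rho> - g2 > 0" unfolding rg2 using \<open>l1 * s > l2\<close> s1 c0 by simp
    ultimately have R: "R = g2 * (g1 + g2) / (l1 * l2)" using d12 unfolding R_def maxmin_gain_def by simp
    have e: "1 / \<kappa> + s\<^sup>2 = (l2 + l1 * s\<^sup>2) / l1" "1 + \<kappa> = (l1 + l2) / l2"
      unfolding k using l1 l2 by (simp_all add: field_simps)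
    show "R = (1 + s\<^sup>2) * (1 / \<kappa> + s\<^sup>2) * (1 + \<kappa>) / c2\<^sup>2"
      unfolding R e unfolding sum unfolding g2 c22 using c0 l1 l2 by (simp add: field_simps)
  qed
qed

lemma cos_sin_arccos_sqrt:
  fixes c :: real
  assumes "0 \<le> c" "c \<le> 1"
  shows "cos (arccos (sqrt c)) = sqrt c" and "sin (arccos (sqrt c)) = sqrt (1 - c)"
proof -
  have "0 \<le> sqrt c" "sqrt c \<le> 1" using assms by simp_all
  then have "-1 \<le> sqrt c" "sqrt c \<le> 1" by linarith+
  then show "cos (arccos (sqrt c)) = sqrt c" "sin (arccos (sqrt c)) = sqrt (1 - c)"
    using assms by (simp_all add: cos_arccos sin_arccos)
qed

theorem corollary1:
  fixes h1 h2 :: "complex^'m" and V :: "complex^'m^'m"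
    and P \<sigma> lam1 lam2 \<kappa> \<theta> \<eta> :: real and i1 i2 :: 'm
  assumes indep: "lin_indep2 h1 h2"
    and P: "P > 0" and \<sigma>: "\<sigma> > 0"
    and l1: "lam1 > 0" and l2: "lam2 > 0"
    and idx: "i1 \<noteq> i2"
    and V: "unitary V"
    and eig: "outer h1 - outer h2 =
      V ** cdiag (\<lambda>i. if i = i1 then complex_of_real lam1
                     else if i = i2 then - complex_of_real lam2 else 0) ** cadj V"
    and \<kappa>_def: "\<kappa> = lam1 / lam2"
    and \<theta>_def: "\<theta> = arccos (sqrt lam1 / cmod ((cadj V *v h1) $ i1))"
    and \<eta>_def: "\<eta> = 10 * log 10 (snr_md P \<sigma> h1 h2 / snr_zf P \<sigma> h1 h2)"
  shows "(0 < \<kappa> \<and> \<kappa> \<le> 1 \<and> 0 \<le> sin \<theta> \<and> sin \<theta> \<le> \<kappa> \<longrightarrow>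
            \<eta> = 10 * log 10 ((1 + (sin \<theta>)\<^sup>2) / (1 - sin \<theta>)\<^sup>2))
       \<and> (0 < \<kappa> \<and> \<kappa> \<le> 1 \<and> \<kappa> < sin \<theta> \<and> sin \<theta> < 1 \<longrightarrow>
            \<eta> = 10 * log 10 ((1 + (sin \<theta>)\<^sup>2) * (\<kappa> + (sin \<theta>)\<^sup>2) * (1 + 1 / \<kappa>) / (cos \<theta>) ^ 4))
       \<and> (\<kappa> > 1 \<and> 0 \<le> sin \<theta> \<and> sin \<theta> \<le> 1 / \<kappa> \<longrightarrow>
            \<eta> = 10 * log 10 ((1 + (sin \<theta>)\<^sup>2) / (1 - sin \<theta>)\<^sup>2))
       \<and> (\<kappa> > 1 \<and> 1 / \<kappa> < sin \<theta> \<and> sin \<theta> < 1 \<longrightarrow>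
            \<eta> = 10 * log 10 ((1 + (sin \<theta>)\<^sup>2) * (1 / \<kappa> + (sin \<theta>)\<^sup>2) * (1 + \<kappa>) / (cos \<theta>) ^ 4))"
proof -
  define g1 g2 \<rho> t where "g1 = (norm h1)\<^sup>2" and "g2 = (norm h2)\<^sup>2"
    and "\<rho> = cmod (cinner h1 h2)" and "t = (cmod ((cadj V *v h1) $ i1))\<^sup>2"
  note gram = gram_from_eigendecomposition[OF l1 l2 idx V eig, folded g1_def g2_def \<rho>_def t_def]
  define c2 where "c2 = lam1 / t"
  have "0 \<le> \<rho>" unfolding \<rho>_def by simp
  note angle = gram_entries_by_angle[OF l1 l2 this gram(4) gram(2) gram(3) gram(1), folded c2_def]
  have "sqrt lam1 / cmod ((cadj V *v h1) $ i1) = sqrt c2"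
    unfolding c2_def t_def by (simp add: real_sqrt_divide)
  then have "sin \<theta> = sqrt (1 - c2)" "(cos \<theta>) ^ 4 = c2\<^sup>2"
    using cos_sin_arccos_sqrt[of c2] angle(4,5) unfolding \<theta>_def
    by (simp_all add: power4_eq_xxxx power2_eq_square)
  moreover have "\<eta> = 10 * log 10 (maxmin_gain g1 g2 \<rho> * (g1 + g2) / (lam1 * lam2))"
    using snr_ratio_eq[of h1 h2 P \<sigma>] gram(2) l1 l2 P \<sigma>
    unfolding \<eta>_def g1_def g2_def \<rho>_def by simp
  ultimately show ?thesis
    using gain_ratio_by_angle[OF l1 l2 angle(2,3,1,6,7,8) gram(2) \<kappa>_def] by simp
qed

end
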